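(* Let $T>0$, $c>0$, let $U\subseteq\mathbb{R}^k$, and let $f:[0,T]\times\mathbb{R}^n\times U\to\mathbb{R}^n$ be continuous and continuously differentiable in its second argument. Let $\|\cdot\|$ be a norm on $\mathbb{R}^n$ with dual norm $\|\cdot\|_\star$. Consider the system $\dot x(t)=f(t,x(t),u(t))$ and its adjoint (costate) system $\dot\lambda(t)=-D_xf(t,x(t),u(t))^\top\lambda(t)-v(t)$ on $[0,T]$, with inputs $x(t)\in\mathbb{R}^n$, $u(t)\in U$, $v(t)\in\mathbb{R}^n$, and let $\Lambda^{\leftarrow}(t)=\lambda(T-t)$ be the time-reversed costate, which satisfies $\dot{\Lambda}^{\leftarrow}(t)=D_xf(T-t,x(T-t),u(T-t))^\top\Lambda^{\leftarrow}(t)+v(T-t)$. The following are equivalent: (i) the $x$-system is strongly infinitesimally contracting with respect to $\|\cdot\|$ with rate $c$, i.e. for all $t\in[0,T]$ and $\tilde u\in U$, the one-sided Lipschitz constant of $x\mapsto f(t,x,\tilde u)$ with respect to $\|\cdot\|$ is at most $-c$; (ii) the $\Lambda^{\leftarrow}$-system is strongly infinitesimally contracting with respect to $\|\cdot\|_\star$ with rate $c$, i.e. for all $t\in[0,T]$, $\xi\in\mathbb{R}^n$, $\tilde u\in U$, $w\in\mathbb{R}^n$, the one-sided Lipschitz constant of $\Lambda\mapsto D_xf(T-t,\xi,\tilde u)^\top\Lambda+w$ with respect to $\|\cdot\|_\star$ is at most $-c$.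
   Context: The dual norm is $\|z\|_\star=\sup_{\|y\|\le1}y^\top z$. For a matrix $A$ and a norm $\|\cdot\|$, the induced norm is $\|A\|=\sup_{\|x\|=1}\|Ax\|$ and the logarithmic norm is $\mu(A)=\lim_{h\to0^+}(\|I_n+hA\|-1)/h$. For a continuously differentiable $F:\mathbb{R}^n\to\mathbb{R}^n$, its one-sided Lipschitz constant with respect to a norm is $\sup_{x\in\mathbb{R}^n}\mu(DF(x))$, with $\mu$ computed in that norm. *)

theory Defs
  imports "HOL-Analysis.Analysis"
begin

definition is_norm :: "('a::real_vector \<Rightarrow> real) \<Rightarrow> bool" where
  "is_norm N \<longleftrightarrow> (\<forall>x. 0 \<le> N x) \<and> (\<forall>x. N x = 0 \<longleftrightarrow> x = 0)
     \<and> (\<forall>a x. N (a *\<^sub>R x) = \<bar>a\<bar> * N x) \<and> (\<forall>x y. N (x + y) \<le> N x + N y)"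

definition dual_norm :: "(real^'n \<Rightarrow> real) \<Rightarrow> real^'n \<Rightarrow> real" where
  "dual_norm N z = Sup {y \<bullet> z | y. N y \<le> 1}"

definition induced_norm :: "(real^'n \<Rightarrow> real) \<Rightarrow> real^'n^'n \<Rightarrow> real" where
  "induced_norm N A = Sup {N (A *v x) | x. N x = 1}"

definition log_norm :: "(real^'n \<Rightarrow> real) \<Rightarrow> real^'n^'n \<Rightarrow> real" where
  "log_norm N A = Lim (at_right 0) (\<lambda>h. (induced_norm N (mat 1 + h *\<^sub>R A) - 1) / h)"

definition jac :: "(real^'n \<Rightarrow> real^'m) \<Rightarrow> real^'n \<Rightarrow> real^'n^'m" where
  "jac F x = matrix (frechet_derivative F (at x))"

text \<open>One-sided Lipschitz constant \<open>sup_x \<mu>(DF(x))\<close>, taken in the extended reals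
  so that the supremum is always meaningful.\<close>
definition osL :: "(real^'n \<Rightarrow> real) \<Rightarrow> (real^'n \<Rightarrow> real^'n) \<Rightarrow> ereal" where
  "osL N F = (SUP x. ereal (log_norm N (jac F x)))"

end

theory Submission
  imports Defs
begin

(* The adjoint field Lambda |-> A^T Lambda + w is affine, so its one-sided Lipschitz constant
   is the logarithmic norm of A^T, A = D_x f(T - t, xi, u).  For the dual norm the induced
   norm of B^T equals that of B: one inequality is the duality y . (B^T z) = (B y) . z, the
   other also needs a functional attaining N (B x), i.e. finite-dimensional Hahn-Banach.
   Applied to B = I + h A this gives mu_dual(A^T) = mu(A), and the two contraction conditions
   coincide after the reparametrisation t |-> T - t of [0, T]. *)

context
  fixes N :: "'a::real_vector \<Rightarrow> real"
  assumes N: "is_norm N"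
begin

lemma is_norm_nonneg: "0 \<le> N x"
  using N unfolding is_norm_def by blast

lemma is_norm_eq_0_iff: "N x = 0 \<longleftrightarrow> x = 0"
  using N unfolding is_norm_def by blast

lemma is_norm_scaleR: "N (a *\<^sub>R x) = \<bar>a\<bar> * N x"
  using N unfolding is_norm_def by blast

lemma is_norm_triangle: "N (x + y) \<le> N x + N y"
  using N unfolding is_norm_def by blast

lemma is_norm_zero: "N 0 = 0"
  by (simp add: is_norm_eq_0_iff)

lemma is_norm_minus: "N (- x) = N x"
  using is_norm_scaleR[of "-1" x] by simp

lemma is_norm_pos: "x \<noteq> 0 \<Longrightarrow> 0 < N x"
  using is_norm_nonneg[of x] is_norm_eq_0_iff[of x] by linarith

lemma is_norm_normalize: "x \<noteq> 0 \<Longrightarrow> N ((1 / N x) *\<^sub>R x) = 1"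
  using is_norm_pos[of x] by (simp add: is_norm_scaleR)

lemma is_norm_convex_combination:
  assumes "0 \<le> u" "0 \<le> v"
  shows "N (u *\<^sub>R x + v *\<^sub>R y) \<le> u * N x + v * N y"
  using is_norm_triangle[of "u *\<^sub>R x" "v *\<^sub>R y"] assms by (simp add: is_norm_scaleR)

lemma is_norm_convex_on: "convex_on UNIV N"
  unfolding convex_on_def using is_norm_convex_combination by simp

lemma convex_is_norm_unit_ball: "convex {y. N y \<le> 1}"
proof (rule convexI)
  fix x y and u v :: real
  assume "x \<in> {y. N y \<le> 1}" "y \<in> {y. N y \<le> 1}" "0 \<le> u" "0 \<le> v" "u + v = 1"
  then show "u *\<^sub>R x + v *\<^sub>R y \<in> {y. N y \<le> 1}"
    using is_norm_convex_combination[of u v x y] mult_left_mono[of "N x" 1 u]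
      mult_left_mono[of "N y" 1 v] by simp
qed

end

context
  fixes N :: "'a::euclidean_space \<Rightarrow> real"
  assumes N: "is_norm N"
begin

lemma is_norm_ex_unit: "\<exists>x. N x = 1"
  using is_norm_normalize[OF N] SOME_Basis nonzero_Basis by blast

lemma is_norm_equivalent:
  obtains m M where "0 < m" "\<And>x. m * norm x \<le> N x" "0 < M" "\<And>x. N x \<le> M * norm x"
proof -
  have cont: "continuous_on (sphere 0 1) N"
    using convex_on_continuous[OF open_UNIV is_norm_convex_on[OF N]] continuous_on_subset by blast
  have ne: "sphere (0::'a) 1 \<noteq> {}"
    using SOME_Basis by (metis mem_sphere_0 norm_Basis empty_iff)
  obtain x0 where x0: "x0 \<in> sphere 0 1" "\<And>y. y \<in> sphere 0 1 \<Longrightarrow> N x0 \<le> N y"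
    using continuous_attains_inf[OF compact_sphere ne cont] by blast
  obtain x1 where x1: "\<And>y. y \<in> sphere 0 1 \<Longrightarrow> N y \<le> N x1"
    using continuous_attains_sup[OF compact_sphere ne cont] by blast
  have N_sgn: "N x = norm x * N (sgn x)" for x
    using is_norm_scaleR[OF N, of "norm x" "sgn x"] by (cases "x = 0") (simp_all add: sgn_div_norm)
  have "N x0 * norm x \<le> N x" "N x \<le> N x1 * norm x" for x
    using x0(2)[of "sgn x"] x1[of "sgn x"] N_sgn[of x]
    by (cases "x = 0"; simp add: norm_sgn is_norm_zero[OF N] mult.commute mult_left_mono)+
  moreover have "0 < N x0" "0 < N x1"
    using x0 x1[of x0] is_norm_pos[OF N, of x0] by force+
  ultimately show ?thesis using that by blast
qed

text \<open>Finite-dimensional Hahn--Banach, via a supporting hyperplane of the unit ball at \<open>x / N x\<close>.\<close>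

lemma is_norm_norming_functional:
  obtains z where "\<And>y. N y \<le> 1 \<Longrightarrow> y \<bullet> z \<le> 1" "z \<bullet> x = N x"
proof (cases "x = 0")
  case True
  then show ?thesis using that[of 0] by (simp add: is_norm_zero[OF N])
next
  case False
  define S where "S = {y. N y \<le> 1}"
  define x0 where "x0 = (1 / N x) *\<^sub>R x"
  have cvx: "convex S"
    unfolding S_def by (rule convex_is_norm_unit_ball[OF N])
  have x0S: "x0 \<in> S" and x: "x = N x *\<^sub>R x0"
    using is_norm_normalize[OF N False] is_norm_pos[OF N False] by (simp_all add: S_def x0_def)
  have "x0 \<notin> rel_interior S"
  proof
    assume "x0 \<in> rel_interior S"
    moreover have "0 \<in> affine hull S"
      by (simp add: S_def hull_inc is_norm_zero[OF N])
    ultimately obtain e where "e > 1" "e *\<^sub>R x0 \<in> S"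
      using convex_rel_interior_if2[OF cvx] by fastforce
    then show False
      using x0S is_norm_scaleR[OF N, of e x0] is_norm_normalize[OF N False] by (simp add: S_def x0_def)
  qed
  then obtain a where "a \<noteq> 0" and a: "\<And>y. y \<in> S \<Longrightarrow> a \<bullet> x0 \<le> a \<bullet> y"
    using supporting_hyperplane_rel_boundary[OF cvx x0S] by metis
  define s where "s = - (a \<bullet> x0)"
  have "a \<bullet> x0 \<le> a \<bullet> (- (1 / N a) *\<^sub>R a)"
    using a[of "- (1 / N a) *\<^sub>R a"] is_norm_normalize[OF N \<open>a \<noteq> 0\<close>]
    by (simp add: S_def is_norm_minus[OF N])
  moreover have "0 < a \<bullet> ((1 / N a) *\<^sub>R a)"
    using \<open>a \<noteq> 0\<close> is_norm_pos[OF N, of a] by simp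
  ultimately have "0 < s" by (simp add: s_def)
  show ?thesis
  proof (rule that[of "(1 / s) *\<^sub>R (- a)"])
    fix y assume "N y \<le> 1"
    then show "y \<bullet> (1 / s) *\<^sub>R (- a) \<le> 1"
      using a[of y] \<open>0 < s\<close> by (simp add: S_def s_def inner_commute field_simps)
  next
    show "(1 / s) *\<^sub>R (- a) \<bullet> x = N x"
      using \<open>0 < s\<close> inner_scaleR_right[of a "N x" x0] x by (simp add: s_def)
  qed
qed

end

context
  fixes N :: "real^'n \<Rightarrow> real"
  assumes N: "is_norm N"
begin

lemma bdd_above_dual_norm: "bdd_above {y \<bullet> z | y. N y \<le> 1}"
proof -
  obtain m where m: "0 < m" "\<And>x. m * norm x \<le> N x"
    using is_norm_equivalent[OF N] by metis
  have "y \<bullet> z \<le> 1 / m * norm z" if "N y \<le> 1" for y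
  proof -
    have "norm y \<le> 1 / m"
      using m(2)[of y] that m(1) by (simp add: field_simps)
    have "y \<bullet> z \<le> norm y * norm z" by (rule norm_cauchy_schwarz)
    also have "\<dots> \<le> 1 / m * norm z"
      using \<open>norm y \<le> 1 / m\<close> by (rule mult_right_mono) simp
    finally show ?thesis .
  qed
  then show ?thesis unfolding bdd_above_def by blast
qed

lemma inner_le_dual_norm: "N y \<le> 1 \<Longrightarrow> y \<bullet> z \<le> dual_norm N z"
  unfolding dual_norm_def by (rule cSup_upper) (use bdd_above_dual_norm in auto)

lemma dual_norm_le:
  assumes "\<And>y. N y \<le> 1 \<Longrightarrow> y \<bullet> z \<le> K"
  shows "dual_norm N z \<le> K"
proof -
  have "N 0 \<le> 1"
    by (simp add: is_norm_zero[OF N])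
  then have "0 \<bullet> z \<in> {y \<bullet> z | y. N y \<le> 1}"
    by blast
  then show ?thesis
    unfolding dual_norm_def using assms by (intro cSup_least) auto
qed

lemma abs_inner_le_dual_norm: "N y \<le> 1 \<Longrightarrow> \<bar>y \<bullet> z\<bar> \<le> dual_norm N z"
  using inner_le_dual_norm[of y z] inner_le_dual_norm[of "- y" z] by (simp add: is_norm_minus[OF N])

lemma inner_le_dual_norm_mult: "y \<bullet> z \<le> dual_norm N z * N y"
proof (cases "y = 0")
  case True
  then show ?thesis by (simp add: is_norm_zero[OF N])
next
  case False
  have "(1 / N y) * (y \<bullet> z) \<le> dual_norm N z"
    using inner_le_dual_norm[of "(1 / N y) *\<^sub>R y" z] is_norm_normalize[OF N False] by simp
  then show ?thesis
    using is_norm_pos[OF N False] by (simp add: field_simps)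
qed

lemma dual_norm_nonneg: "0 \<le> dual_norm N z"
  using inner_le_dual_norm[of 0 z] by (simp add: is_norm_zero[OF N])

lemma dual_norm_scaleR: "dual_norm N (a *\<^sub>R z) = \<bar>a\<bar> * dual_norm N z"
proof -
  have scale_le: "dual_norm N (b *\<^sub>R v) \<le> \<bar>b\<bar> * dual_norm N v" for b v
  proof (rule dual_norm_le)
    fix y assume "N y \<le> 1"
    have "y \<bullet> b *\<^sub>R v \<le> \<bar>b\<bar> * \<bar>y \<bullet> v\<bar>"
      by (simp flip: abs_mult)
    also have "\<dots> \<le> \<bar>b\<bar> * dual_norm N v"
      using abs_inner_le_dual_norm[OF \<open>N y \<le> 1\<close>] by (rule mult_left_mono) simp
    finally show "y \<bullet> b *\<^sub>R v \<le> \<bar>b\<bar> * dual_norm N v" .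
  qed
  show ?thesis
  proof (cases "a = 0")
    case True
    then show ?thesis using scale_le[of 0 z] dual_norm_nonneg[of 0] by simp
  next
    case False
    have "dual_norm N z \<le> \<bar>1 / a\<bar> * dual_norm N (a *\<^sub>R z)"
      using scale_le[of "1 / a" "a *\<^sub>R z"] False by simp
    then have "\<bar>a\<bar> * dual_norm N z \<le> dual_norm N (a *\<^sub>R z)"
      using False by (simp add: field_simps)
    then show ?thesis using scale_le[of a z] by linarith
  qed
qed

lemma dual_norm_pos:
  assumes "z \<noteq> 0"
  shows "0 < dual_norm N z"
proof -
  have "0 < (1 / N z) *\<^sub>R z \<bullet> z"
    using assms is_norm_pos[OF N assms] by simp
  also have "\<dots> \<le> dual_norm N z"
    by (rule inner_le_dual_norm) (simp add: is_norm_normalize[OF N assms])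
  finally show ?thesis .
qed

lemma is_norm_dual_norm: "is_norm (dual_norm N)"
  unfolding is_norm_def
proof (intro conjI allI)
  fix z z' :: "real^'n"
  show "0 \<le> dual_norm N z" by (rule dual_norm_nonneg)
  show "dual_norm N z = 0 \<longleftrightarrow> z = 0"
    using dual_norm_pos[of z] dual_norm_scaleR[of 0 0] by (cases "z = 0") auto
  show "dual_norm N (z + z') \<le> dual_norm N z + dual_norm N z'"
    by (rule dual_norm_le) (simp add: inner_add_right add_mono inner_le_dual_norm)
qed (rule dual_norm_scaleR)

lemma dual_norm_norming:
  obtains z where "dual_norm N z \<le> 1" "z \<bullet> x = N x"
proof -
  obtain z where z: "\<And>y. N y \<le> 1 \<Longrightarrow> y \<bullet> z \<le> 1" "z \<bullet> x = N x"
    using is_norm_norming_functional[OF N, where x = x] by blast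
  have "dual_norm N z \<le> 1"
    using z(1) by (rule dual_norm_le)
  then show ?thesis
    using z(2) by (rule that)
qed

end

context
  fixes P :: "real^'n \<Rightarrow> real"
  assumes P: "is_norm P"
begin

lemma bdd_above_induced_norm: "bdd_above {P (B *v x) | x. P x = 1}"
proof -
  obtain m M where m: "0 < m" "\<And>x. m * norm x \<le> P x"
    and M: "0 < M" "\<And>x. P x \<le> M * norm x"
    using is_norm_equivalent[OF P] by metis
  obtain K where K: "0 < K" "\<And>x. norm (B *v x) \<le> norm x * K"
    using bounded_linear.pos_bounded[OF matrix_vector_mul_bounded_linear] by blast
  have "P (B *v x) \<le> M * (1 / m * K)" if "P x = 1" for x
  proof -
    have "norm x \<le> 1 / m"
      using m(2)[of x] that m(1) by (simp add: field_simps)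
    have "P (B *v x) \<le> M * norm (B *v x)" by (rule M(2))
    also have "\<dots> \<le> M * (norm x * K)" using K(2) M(1) by (simp add: mult_left_mono)
    also have "\<dots> \<le> M * (1 / m * K)"
      using \<open>norm x \<le> 1 / m\<close> K(1) M(1) by (intro mult_left_mono mult_right_mono) auto
    finally show ?thesis .
  qed
  then show ?thesis unfolding bdd_above_def by blast
qed

lemma induced_norm_ge: "P x = 1 \<Longrightarrow> P (B *v x) \<le> induced_norm P B"
  unfolding induced_norm_def by (rule cSup_upper) (use bdd_above_induced_norm in auto)

lemma induced_norm_le:
  assumes "\<And>x. P x = 1 \<Longrightarrow> P (B *v x) \<le> K"
  shows "induced_norm P B \<le> K"
  unfolding induced_norm_def using assms is_norm_ex_unit[OF P] by (intro cSup_least) auto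

lemma induced_norm_nonneg: "0 \<le> induced_norm P B"
  using is_norm_ex_unit[OF P] induced_norm_ge is_norm_nonneg[OF P] order_trans by blast

lemma norm_mult_le_induced_norm: "P (B *v x) \<le> induced_norm P B * P x"
proof (cases "x = 0")
  case True
  then show ?thesis by (simp add: is_norm_zero[OF P])
next
  case False
  have "(1 / P x) * P (B *v x) \<le> induced_norm P B"
    using induced_norm_ge[OF is_norm_normalize[OF P False], of B] is_norm_pos[OF P False]
    by (simp add: matrix_vector_mult_scaleR is_norm_scaleR[OF P])
  then show ?thesis
    using is_norm_pos[OF P False] by (simp add: field_simps)
qed

end

lemma inner_transpose_mult: "(transpose B *v z) \<bullet> x = z \<bullet> (B *v x)"
  for B :: "real^'n^'m"
  by (metis dot_lmul_matrix transpose_transpose vector_transpose_matrix)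

lemma induced_norm_transpose:
  fixes N :: "real^'n \<Rightarrow> real" and B :: "real^'n^'n"
  assumes N: "is_norm N"
  shows "induced_norm (dual_norm N) (transpose B) = induced_norm N B"
proof (rule antisym)
  let ?D = "dual_norm N"
  have D: "is_norm ?D" by (rule is_norm_dual_norm[OF N])
  show "induced_norm ?D (transpose B) \<le> induced_norm N B"
  proof (intro induced_norm_le[OF D] dual_norm_le[OF N])
    fix z y assume z: "?D z = 1" and y: "N y \<le> 1"
    have "y \<bullet> (transpose B *v z) = (B *v y) \<bullet> z"
      using inner_transpose_mult[of B z y] by (simp add: inner_commute)
    also have "\<dots> \<le> N (B *v y)"
      using inner_le_dual_norm_mult[OF N, of "B *v y" z] z by simp
    also have "\<dots> \<le> induced_norm N B * N y"
      by (rule norm_mult_le_induced_norm[OF N])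
    also have "\<dots> \<le> induced_norm N B"
      using y induced_norm_nonneg[OF N] by (simp add: mult_left_le)
    finally show "y \<bullet> (transpose B *v z) \<le> induced_norm N B" .
  qed
  show "induced_norm N B \<le> induced_norm ?D (transpose B)"
  proof (rule induced_norm_le[OF N])
    fix x assume x: "N x = 1"
    obtain z where z: "?D z \<le> 1" "z \<bullet> (B *v x) = N (B *v x)"
      using dual_norm_norming[OF N] by blast
    have "N (B *v x) = x \<bullet> (transpose B *v z)"
      using z(2) inner_transpose_mult[of B z x] by (simp add: inner_commute)
    also have "\<dots> \<le> ?D (transpose B *v z)"
      using inner_le_dual_norm_mult[OF N, of x] x by simp
    also have "\<dots> \<le> induced_norm ?D (transpose B) * ?D z"
      by (rule norm_mult_le_induced_norm[OF D])
    also have "\<dots> \<le> induced_norm ?D (transpose B)"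
      using z(1) induced_norm_nonneg[OF D] by (simp add: mult_left_le)
    finally show "N (B *v x) \<le> induced_norm ?D (transpose B)" .
  qed
qed

lemma log_norm_transpose:
  fixes N :: "real^'n \<Rightarrow> real"
  assumes "is_norm N"
  shows "log_norm (dual_norm N) (transpose A) = log_norm N A"
proof -
  have "transpose (mat 1 + h *\<^sub>R A) = mat 1 + h *\<^sub>R transpose A" for h
    by (simp add: vec_eq_iff transpose_def mat_def)
  then show ?thesis
    unfolding log_norm_def by (metis induced_norm_transpose[OF assms])
qed

lemma jac_affine: "jac (\<lambda>x. M *v x + w) x = M"
proof -
  have "((\<lambda>x. M *v x + w) has_derivative (*v) M) (at x)"
    by (intro has_derivative_add_const bounded_linear_imp_has_derivative
        matrix_vector_mul_bounded_linear)
  then show ?thesis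
    unfolding jac_def by (simp add: frechet_derivative_at[symmetric] matrix_of_matrix_vector_mul)
qed

lemma osL_affine: "osL P (\<lambda>x. M *v x + w) = ereal (log_norm P M)"
  unfolding osL_def jac_affine by simp

lemma osL_le_ereal_iff: "osL P F \<le> ereal a \<longleftrightarrow> (\<forall>x. log_norm P (jac F x) \<le> a)"
  unfolding osL_def by (simp add: SUP_le_iff)

lemma ball_atLeastAtMost_reflect:
  fixes T :: real
  shows "(\<forall>t\<in>{0..T}. P (T - t)) \<longleftrightarrow> (\<forall>t\<in>{0..T}. P t)"
proof
  assume reflected: "\<forall>t\<in>{0..T}. P (T - t)"
  show "\<forall>t\<in>{0..T}. P t"
  proof
    fix t assume "t \<in> {0..T}"
    then have "T - t \<in> {0..T}" by auto
    with reflected show "P t" by fastforce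
  qed
qed auto

theorem theorem3:
  fixes f :: "real \<Rightarrow> real^'n \<Rightarrow> real^'k \<Rightarrow> real^'n"
    and U :: "(real^'k) set" and T c :: real and N :: "real^'n \<Rightarrow> real"
  assumes T: "T > 0" and c: "c > 0"
    and N: "is_norm N"
    and f_cont: "continuous_on ({0..T} \<times> UNIV \<times> U) (\<lambda>(t, x, u). f t x u)"
    and f_diff: "\<And>t x u. t \<in> {0..T} \<Longrightarrow> u \<in> U \<Longrightarrow> (\<lambda>y. f t y u) differentiable (at x)"
    and Df_cont: "continuous_on ({0..T} \<times> UNIV \<times> U) (\<lambda>(t, x, u). jac (\<lambda>y. f t y u) x)"
  shows "(\<forall>t\<in>{0..T}. \<forall>u\<in>U. osL N (\<lambda>x. f t x u) \<le> ereal (- c))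
     \<longleftrightarrow> (\<forall>t\<in>{0..T}. \<forall>\<xi>. \<forall>u\<in>U. \<forall>w.
            osL (dual_norm N) (\<lambda>\<Lambda>. transpose (jac (\<lambda>y. f (T - t) y u) \<xi>) *v \<Lambda> + w) \<le> ereal (- c))"
proof -
  let ?contracting = "\<lambda>t. \<forall>u\<in>U. \<forall>x. log_norm N (jac (\<lambda>y. f t y u) x) \<le> - c"
  have adjoint: "osL (dual_norm N) (\<lambda>\<Lambda>. transpose (jac (\<lambda>y. f (T - t) y u) \<xi>) *v \<Lambda> + w) \<le> ereal (- c)
      \<longleftrightarrow> log_norm N (jac (\<lambda>y. f (T - t) y u) \<xi>) \<le> - c" for t \<xi> u w
    unfolding osL_affine log_norm_transpose[OF N] by simp
  have "(\<forall>t\<in>{0..T}. ?contracting (T - t)) \<longleftrightarrow> (\<forall>t\<in>{0..T}. ?contracting t)"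
    by (rule ball_atLeastAtMost_reflect)
  then show ?thesis
    unfolding adjoint unfolding osL_le_ereal_iff by blast
qed

end
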